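(* Let $G$ be the three-player game with $A_i=\{a_{i1},a_{i2}\}$ for $i=1,2,3$ and fitness vectors $\pi(a_{11},a_{21},a_{31})=(7,7,7)$, $\pi(a_{11},a_{22},a_{31})=(9,6,0)$, $\pi(a_{12},a_{21},a_{31})=(6,0,9)$, $\pi(a_{12},a_{22},a_{31})=(6,0,9)$, $\pi(a_{11},a_{21},a_{32})=(0,9,6)$, $\pi(a_{11},a_{22},a_{32})=(9,6,0)$, $\pi(a_{12},a_{21},a_{32})=(0,9,6)$, $\pi(a_{12},a_{22},a_{32})=(1,1,1)$. Then the profile $(a_{11},a_{21},a_{31})$, which is a Pareto-efficient strict Nash equilibrium of $G$, is not stable under perfect observability.
   Context: Preference types: $\Theta=\mathbb{R}^A$, $A=A_1\times A_2\times A_3$ (utility functions on $A$, extended multilinearly to mixed profiles); $\pi_i$ likewise extended. $\mathcal{M}(\Theta^3)$ is the set of product distributions $\mu=\mu_1\times\mu_2\times\mu_3$ with finitely supported marginals; $\operatorname{supp}\mu=\prod_i\operatorname{supp}\mu_i$, $\mu(\theta)=\prod_i\mu_i(\theta_i)$, $\mu_{-i}(\theta_{-i})=\prod_{j\ne i}\mu_j(\theta_j)$. Mutants: for nonempty $J\subseteq N=\{1,2,3\}$, a mutant sub-profile is $\tilde\theta_J\in\prod_{j\in J}(\Theta\setminus\operatorname{supp}\mu_j)$ with shares $\varepsilon\in(0,1)^{|J|}$, $\|\varepsilon\|=\max_j\varepsilon_j$; post-entry $\tilde\mu^\varepsilon_i=(1-\varepsilon_i)\mu_i+\varepsilon_i\delta_{\tilde\theta_i}$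 for $i\in J$, $\tilde\mu^\varepsilon_i=\mu_i$ otherwise. Perfect observability: an equilibrium is a map $b:\operatorname{supp}\mu\to\prod_i\Delta(A_i)$ such that each $b(\theta)$ is a Nash equilibrium of the game with payoffs $\theta_1,\theta_2,\theta_3$; $B_1(\mu)$ is the set of these; $(\mu,b)$ is a configuration, with aggregate outcome $\varphi_{\mu,b}(a)=\sum_{\theta}\mu(\theta)\prod_i b_i(\theta)(a_i)$. Average fitness $\Pi_{\theta_i}(\mu;b)=\sum_{\theta'_{-i}}\mu_{-i}(\theta'_{-i})\pi_i(b(\theta_i,\theta'_{-i}))$. Balanced: equal average fitness of all types within each population. Focal set $B_1(\tilde\mu^\varepsilon;b)=\{\tilde b\in B_1(\tilde\mu^\varepsilon):\tilde b=b\text{ on }\operatorname{supp}\mu\}$. $(\mu,b)$ is stable if balanced and for every nonempty $J$ and every $\tilde\theta_J$ there is $\bar\epsilon\in(0,1)$ such that for all $\varepsilon$ with $\|\varepsilon\|<\bar\epsilon$ and all $\tilde b$ in the focal set, either (i) some $j\in J$ has $\Pi_{\theta_j}(\tilde\mu^\varepsilon;\tilde b)>\Pi_{\tilde\theta_j}(\tilde\mu^\varepsilon;\tilde b)$ for all $\theta_j\in\operatorname{supp}\mu_j$, or (ii) for every $i$ all types in $\operatorname{supp}\tilde\mu^\varepsilon_i$ have equal average fitness. A pure profile $a$ is stable if the point mass at $a$ is the aggregate outcome of a stable configuration. *)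

theory Defs
  imports Complex_Main
begin

datatype pl = P1 | P2 | P3

instance pl :: finite
proof
  have "(UNIV :: pl set) = {P1, P2, P3}" by (auto intro: pl.exhaust)
  then show "finite (UNIV :: pl set)" by (metis finite.emptyI finite_insert)
qed

text \<open>act: X1 stands for a_{i1}, X2 for a_{i2} (same labels for each player i).\<close>
datatype act = X1 | X2

instance act :: finite
proof
  have "(UNIV :: act set) = {X1, X2}" by (auto intro: act.exhaust)
  then show "finite (UNIV :: act set)" by (metis finite.emptyI finite_insert)
qed

text \<open>A preference type / fitness function is a real function on pure profiles
  ('p => 'a); mixed profiles are 'p => 'a => real; EU is the multilinear extension.\<close>

definition EU :: "(('p::finite \<Rightarrow> 'a::finite) \<Rightarrow> real) \<Rightarrow> ('p \<Rightarrow> 'a \<Rightarrow> real) \<Rightarrow> real" where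
  "EU u \<sigma> = (\<Sum>a\<in>UNIV. u a * (\<Prod>i\<in>UNIV. \<sigma> i (a i)))"

definition mixed :: "('a::finite \<Rightarrow> real) \<Rightarrow> bool" where
  "mixed s \<longleftrightarrow> (\<forall>x. 0 \<le> s x) \<and> sum s UNIV = 1"

definition nash :: "('p::finite \<Rightarrow> ('p \<Rightarrow> 'a::finite) \<Rightarrow> real) \<Rightarrow> ('p \<Rightarrow> 'a \<Rightarrow> real) \<Rightarrow> bool" where
  "nash u \<sigma> \<longleftrightarrow> (\<forall>i. mixed (\<sigma> i)) \<and>
     (\<forall>i s. mixed s \<longrightarrow> EU (u i) (\<sigma>(i := s)) \<le> EU (u i) \<sigma>)"

definition strict_nash_pure :: "('p \<Rightarrow> ('p \<Rightarrow> 'a) \<Rightarrow> real) \<Rightarrow> ('p \<Rightarrow> 'a) \<Rightarrow> bool" where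
  "strict_nash_pure u a \<longleftrightarrow> (\<forall>i x. x \<noteq> a i \<longrightarrow> u i (a(i := x)) < u i a)"

definition pareto_efficient :: "('p \<Rightarrow> ('p \<Rightarrow> 'a) \<Rightarrow> real) \<Rightarrow> ('p \<Rightarrow> 'a) \<Rightarrow> bool" where
  "pareto_efficient u a \<longleftrightarrow>
     \<not> (\<exists>a'. (\<forall>i. u i a \<le> u i a') \<and> (\<exists>i. u i a < u i a'))"

definition supp :: "('b \<Rightarrow> real) \<Rightarrow> 'b set" where
  "supp d = {t. d t \<noteq> 0}"

definition findist :: "('b \<Rightarrow> real) \<Rightarrow> bool" where
  "findist d \<longleftrightarrow> finite (supp d) \<and> (\<forall>t. 0 \<le> d t) \<and> sum d (supp d) = 1"

text \<open>mu : 'p => (preference type => probability); a product distribution in M(Theta^3).\<close>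
definition popdist :: "('p \<Rightarrow> 'b \<Rightarrow> real) \<Rightarrow> bool" where
  "popdist \<mu> \<longleftrightarrow> (\<forall>i. findist (\<mu> i))"

definition suppP :: "('p \<Rightarrow> 'b \<Rightarrow> real) \<Rightarrow> ('p \<Rightarrow> 'b) set" where
  "suppP \<mu> = {\<theta>. \<forall>i. \<theta> i \<in> supp (\<mu> i)}"

definition equil :: "('p::finite \<Rightarrow> (('p \<Rightarrow> 'a::finite) \<Rightarrow> real) \<Rightarrow> real)
     \<Rightarrow> (('p \<Rightarrow> (('p \<Rightarrow> 'a) \<Rightarrow> real)) \<Rightarrow> ('p \<Rightarrow> 'a \<Rightarrow> real)) \<Rightarrow> bool" where
  "equil \<mu> b \<longleftrightarrow> (\<forall>\<theta>\<in>suppP \<mu>. nash \<theta> (b \<theta>))"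

definition outcome :: "('p::finite \<Rightarrow> (('p \<Rightarrow> 'a::finite) \<Rightarrow> real) \<Rightarrow> real)
     \<Rightarrow> (('p \<Rightarrow> (('p \<Rightarrow> 'a) \<Rightarrow> real)) \<Rightarrow> ('p \<Rightarrow> 'a \<Rightarrow> real)) \<Rightarrow> ('p \<Rightarrow> 'a) \<Rightarrow> real" where
  "outcome \<mu> b a = (\<Sum>\<theta>\<in>suppP \<mu>. (\<Prod>i\<in>UNIV. \<mu> i (\<theta> i)) * (\<Prod>i\<in>UNIV. b \<theta> i (a i)))"

definition avgfit :: "('p::finite \<Rightarrow> ('p \<Rightarrow> 'a::finite) \<Rightarrow> real)
     \<Rightarrow> ('p \<Rightarrow> (('p \<Rightarrow> 'a) \<Rightarrow> real) \<Rightarrow> real)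
     \<Rightarrow> (('p \<Rightarrow> (('p \<Rightarrow> 'a) \<Rightarrow> real)) \<Rightarrow> ('p \<Rightarrow> 'a \<Rightarrow> real))
     \<Rightarrow> 'p \<Rightarrow> (('p \<Rightarrow> 'a) \<Rightarrow> real) \<Rightarrow> real" where
  "avgfit \<pi> \<mu> b i t =
     (\<Sum>\<theta>\<in>{\<theta>\<in>suppP \<mu>. \<theta> i = t}. (\<Prod>j\<in>UNIV - {i}. \<mu> j (\<theta> j)) * EU (\<pi> i) (b \<theta>))"

definition balanced :: "('p::finite \<Rightarrow> ('p \<Rightarrow> 'a::finite) \<Rightarrow> real)
     \<Rightarrow> ('p \<Rightarrow> (('p \<Rightarrow> 'a) \<Rightarrow> real) \<Rightarrow> real)
     \<Rightarrow> (('p \<Rightarrow> (('p \<Rightarrow> 'a) \<Rightarrow> real)) \<Rightarrow> ('p \<Rightarrow> 'a \<Rightarrow> real)) \<Rightarrow> bool" where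
  "balanced \<pi> \<mu> b \<longleftrightarrow>
     (\<forall>i. \<forall>t\<in>supp (\<mu> i). \<forall>t'\<in>supp (\<mu> i). avgfit \<pi> \<mu> b i t = avgfit \<pi> \<mu> b i t')"

definition postentry :: "('p \<Rightarrow> 'b \<Rightarrow> real) \<Rightarrow> 'p set \<Rightarrow> ('p \<Rightarrow> 'b) \<Rightarrow> ('p \<Rightarrow> real)
     \<Rightarrow> ('p \<Rightarrow> 'b \<Rightarrow> real)" where
  "postentry \<mu> J thm eps = (\<lambda>i. if i \<in> J
      then (\<lambda>t. (1 - eps i) * \<mu> i t + eps i * (if t = thm i then 1 else 0))
      else \<mu> i)"

definition stable :: "('p::finite \<Rightarrow> ('p \<Rightarrow> 'a::finite) \<Rightarrow> real)
     \<Rightarrow> ('p \<Rightarrow> (('p \<Rightarrow> 'a) \<Rightarrow> real) \<Rightarrow> real)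
     \<Rightarrow> (('p \<Rightarrow> (('p \<Rightarrow> 'a) \<Rightarrow> real)) \<Rightarrow> ('p \<Rightarrow> 'a \<Rightarrow> real)) \<Rightarrow> bool" where
  "stable \<pi> \<mu> b \<longleftrightarrow> balanced \<pi> \<mu> b \<and>
     (\<forall>J thm. J \<noteq> {} \<and> (\<forall>j\<in>J. thm j \<notin> supp (\<mu> j)) \<longrightarrow>
        (\<exists>eb. 0 < eb \<and> eb < 1 \<and>
          (\<forall>eps. (\<forall>j\<in>J. 0 < eps j \<and> eps j < 1 \<and> eps j < eb) \<longrightarrow>
             (\<forall>b'. equil (postentry \<mu> J thm eps) b' \<and> (\<forall>\<theta>\<in>suppP \<mu>. b' \<theta> = b \<theta>) \<longrightarrow>
                ((\<exists>j\<in>J. \<forall>t\<in>supp (\<mu> j).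
                    avgfit \<pi> (postentry \<mu> J thm eps) b' j t
                      > avgfit \<pi> (postentry \<mu> J thm eps) b' j (thm j))
                 \<or> balanced \<pi> (postentry \<mu> J thm eps) b')))))"

definition stable_profile :: "('p::finite \<Rightarrow> ('p \<Rightarrow> 'a::finite) \<Rightarrow> real) \<Rightarrow> ('p \<Rightarrow> 'a) \<Rightarrow> bool" where
  "stable_profile \<pi> a \<longleftrightarrow> (\<exists>\<mu> b. popdist \<mu> \<and> equil \<mu> b \<and> stable \<pi> \<mu> b \<and>
      (\<forall>a'. outcome \<mu> b a' = (if a' = a then 1 else 0)))"

fun fitvec :: "act \<Rightarrow> act \<Rightarrow> act \<Rightarrow> real \<times> real \<times> real" where
  "fitvec X1 X1 X1 = (7, 7, 7)"
| "fitvec X1 X2 X1 = (9, 6, 0)"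
| "fitvec X2 X1 X1 = (6, 0, 9)"
| "fitvec X2 X2 X1 = (6, 0, 9)"
| "fitvec X1 X1 X2 = (0, 9, 6)"
| "fitvec X1 X2 X2 = (9, 6, 0)"
| "fitvec X2 X1 X2 = (0, 9, 6)"
| "fitvec X2 X2 X2 = (1, 1, 1)"

fun pick :: "pl \<Rightarrow> real \<times> real \<times> real \<Rightarrow> real" where
  "pick P1 v = fst v"
| "pick P2 v = fst (snd v)"
| "pick P3 v = snd (snd v)"

definition piG :: "pl \<Rightarrow> (pl \<Rightarrow> act) \<Rightarrow> real" where
  "piG i a = pick i (fitvec (a P1) (a P2) (a P3))"

end

theory Submission
  imports Defs "HOL-Library.FuncSet"
begin

text \<open>
  If \<open>(\<mu>, b)\<close> were a stable configuration with outcome \<open>(a\<^sub>1\<^sub>1, a\<^sub>2\<^sub>1, a\<^sub>3\<^sub>1)\<close>, every match of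
  incumbents would play this profile, so \<open>a\<^sub>i\<^sub>1\<close> is a best reply of every incumbent type
  against it. Let types with constant utility enter all three populations with a common small
  share \<open>e\<close>. In the focal equilibrium two mutants facing an incumbent coordinate on an outcome
  paying them 9 and 6 and the incumbent 0, whatever the incumbent does; all other matches stay
  at \<open>(a\<^sub>1\<^sub>1, a\<^sub>2\<^sub>1, a\<^sub>3\<^sub>1)\<close>. Every incumbent then has average fitness \<open>7 - 7e\<^sup>2\<close> and every
  mutant \<open>7 + e - e\<^sup>2\<close>, so the mutants are neither outperformed nor balanced.
\<close>

definition pure_profile :: "('p \<Rightarrow> 'a) \<Rightarrow> 'p \<Rightarrow> 'a \<Rightarrow> real" where
  "pure_profile a = (\<lambda>i y. if y = a i then 1 else 0)"

lemma mixed_pure_profile: "mixed (pure_profile a i)"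
  unfolding mixed_def pure_profile_def by simp

lemma prod_pure_profile_upd:
  fixes a :: "'p::finite \<Rightarrow> 'a"
  shows "(\<Prod>j\<in>UNIV. ((pure_profile a)(i := s)) j (a' j))
           = (if a' = a(i := a' i) then s (a' i) else 0)"
proof -
  have "(\<Prod>j\<in>UNIV. ((pure_profile a)(i := s)) j (a' j))
          = s (a' i) * (\<Prod>j\<in>UNIV - {i}. pure_profile a j (a' j))"
    by (subst prod.remove[of _ i]) (auto intro!: prod.cong)
  also have "(\<Prod>j\<in>UNIV - {i}. pure_profile a j (a' j))
               = (if \<forall>j\<in>UNIV - {i}. a' j = a j then 1 else 0)"
    by (auto simp: pure_profile_def intro!: prod_zero)
  also have "(\<forall>j\<in>UNIV - {i}. a' j = a j) \<longleftrightarrow> a' = a(i := a' i)"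
    by (auto simp: fun_eq_iff)
  finally show ?thesis by simp
qed

lemma EU_pure_profile_upd:
  fixes a :: "'p::finite \<Rightarrow> 'a::finite"
  shows "EU v ((pure_profile a)(i := s)) = (\<Sum>x\<in>UNIV. s x * v (a(i := x)))"
proof -
  have "EU v ((pure_profile a)(i := s))
          = (\<Sum>a'\<in>UNIV. if a' = a(i := a' i) then v a' * s (a' i) else 0)"
    unfolding EU_def prod_pure_profile_upd by (auto intro: sum.cong)
  also have "\<dots> = (\<Sum>a'\<in>{a'\<in>UNIV. a' = a(i := a' i)}. v a' * s (a' i))"
    by (rule sum.inter_filter[symmetric]) simp
  also have "{a'\<in>UNIV. a' = a(i := a' i)} = range (\<lambda>x. a(i := x))"
    by auto
  also have "(\<Sum>a'\<in>range (\<lambda>x. a(i := x)). v a' * s (a' i)) = (\<Sum>x\<in>UNIV. s x * v (a(i := x)))"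
    by (subst sum.reindex) (auto simp: inj_on_def fun_eq_iff mult.commute)
  finally show ?thesis .
qed

lemma sum_pure_profile_mult:
  fixes f :: "'a::finite \<Rightarrow> real"
  shows "(\<Sum>x\<in>UNIV. pure_profile a i x * f x) = f (a i)"
proof -
  have "(\<Sum>x\<in>UNIV. pure_profile a i x * f x) = (\<Sum>x\<in>UNIV. if x = a i then f x else 0)"
    by (rule sum.cong) (auto simp: pure_profile_def)
  then show ?thesis by simp
qed

lemma EU_pure_profile:
  fixes a :: "'p::finite \<Rightarrow> 'a::finite"
  shows "EU v (pure_profile a) = v a"
  using EU_pure_profile_upd[of v a undefined "pure_profile a undefined"]
  by (simp add: sum_pure_profile_mult)

lemma nash_pure_profile_iff:
  fixes a :: "'p::finite \<Rightarrow> 'a::finite"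
  shows "nash u (pure_profile a) \<longleftrightarrow> (\<forall>i x. u i (a(i := x)) \<le> u i a)"
proof
  assume nash: "nash u (pure_profile a)"
  show "\<forall>i x. u i (a(i := x)) \<le> u i a"
  proof (intro allI)
    fix i x
    have "mixed (pure_profile (a(i := x)) i)" by (rule mixed_pure_profile)
    with nash have "EU (u i) ((pure_profile a)(i := pure_profile (a(i := x)) i)) \<le> EU (u i) (pure_profile a)"
      unfolding nash_def by blast
    then show "u i (a(i := x)) \<le> u i a"
      by (simp add: EU_pure_profile_upd EU_pure_profile sum_pure_profile_mult)
  qed
next
  assume br: "\<forall>i x. u i (a(i := x)) \<le> u i a"
  show "nash u (pure_profile a)"
    unfolding nash_def
  proof (intro conjI allI impI mixed_pure_profile)
    fix i s assume s: "mixed (s :: 'a \<Rightarrow> real)"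
    have "EU (u i) ((pure_profile a)(i := s)) = (\<Sum>x\<in>UNIV. s x * u i (a(i := x)))"
      by (rule EU_pure_profile_upd)
    also have "\<dots> \<le> (\<Sum>x\<in>UNIV. s x * u i a)"
      using s br by (intro sum_mono mult_left_mono) (auto simp: mixed_def)
    also have "\<dots> = EU (u i) (pure_profile a)"
      using s by (simp add: mixed_def EU_pure_profile sum_distrib_right[symmetric])
    finally show "EU (u i) ((pure_profile a)(i := s)) \<le> EU (u i) (pure_profile a)" .
  qed
qed

lemma mixed_ex_pos:
  fixes s :: "'a::finite \<Rightarrow> real"
  assumes "mixed s"
  shows "\<exists>x. 0 < s x"
proof (rule ccontr)
  assume "\<not> (\<exists>x. 0 < s x)"
  with assms have "s = (\<lambda>_. 0)" by (auto simp: mixed_def fun_eq_iff not_less intro: antisym)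
  with assms show False by (simp add: mixed_def)
qed

lemma suppP_nonempty:
  assumes "popdist \<mu>"
  obtains \<theta> where "\<theta> \<in> suppP \<mu>"
proof -
  have "\<exists>t. t \<in> supp (\<mu> p)" for p
  proof -
    have "sum (\<mu> p) (supp (\<mu> p)) = 1"
      using assms by (simp add: popdist_def findist_def)
    then have "supp (\<mu> p) \<noteq> {}" by auto
    then show ?thesis by blast
  qed
  then obtain r where "\<And>p. r p \<in> supp (\<mu> p)" by metis
  then show ?thesis using that by (auto simp: suppP_def)
qed

lemma finite_suppP:
  assumes "popdist (\<mu> :: 'p::finite \<Rightarrow> 'b \<Rightarrow> real)"
  shows "finite (suppP \<mu>)"
proof -
  have "suppP \<mu> = Pi\<^sub>E UNIV (\<lambda>i. supp (\<mu> i))"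
    by (auto simp: suppP_def PiE_UNIV_domain)
  then show ?thesis
    using assms by (simp add: finite_PiE popdist_def findist_def)
qed

lemma equil_point_outcome_pure:
  fixes \<mu> :: "'p::finite \<Rightarrow> (('p \<Rightarrow> 'a::finite) \<Rightarrow> real) \<Rightarrow> real"
  assumes pd: "popdist \<mu>" and eq: "equil \<mu> b"
    and oc: "\<And>a'. outcome \<mu> b a' = (if a' = a then 1 else 0)"
    and \<theta>: "\<theta> \<in> suppP \<mu>"
  shows "b \<theta> = pure_profile a"
proof -
  have mixed: "mixed (b \<theta>' i)" if "\<theta>' \<in> suppP \<mu>" for \<theta>' i
    using eq that by (auto simp: equil_def nash_def)
  have nonneg: "0 \<le> \<mu> i t" for i t
    using pd by (simp add: popdist_def findist_def)
  have weight_pos: "0 < (\<Prod>i\<in>UNIV. \<mu> i (\<theta> i))"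
    using \<theta> nonneg by (intro prod_pos) (auto simp: suppP_def supp_def less_le)
  have other_zero: "(\<Prod>i\<in>UNIV. b \<theta> i (a' i)) = 0" if "a' \<noteq> a" for a'
  proof -
    have "(\<Sum>\<theta>'\<in>suppP \<mu>. (\<Prod>i\<in>UNIV. \<mu> i (\<theta>' i)) * (\<Prod>i\<in>UNIV. b \<theta>' i (a' i))) = 0"
      using oc[of a'] that by (simp add: outcome_def)
    moreover have "\<forall>\<theta>'\<in>suppP \<mu>. 0 \<le> (\<Prod>i\<in>UNIV. \<mu> i (\<theta>' i)) * (\<Prod>i\<in>UNIV. b \<theta>' i (a' i))"
      using nonneg mixed by (auto intro!: mult_nonneg_nonneg prod_nonneg simp: mixed_def)
    ultimately have "(\<Prod>i\<in>UNIV. \<mu> i (\<theta> i)) * (\<Prod>i\<in>UNIV. b \<theta> i (a' i)) = 0"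
      using finite_suppP[OF pd] \<theta> by (simp add: sum_nonneg_eq_0_iff)
    then show ?thesis using weight_pos by (metis mult_eq_0_iff order_less_irrefl)
  qed
  have "\<forall>j. \<exists>x. 0 < b \<theta> j x" using mixed_ex_pos mixed[OF \<theta>] by blast
  then obtain g where g: "\<And>j. 0 < b \<theta> j (g j)" by metis
  have off_zero: "b \<theta> i x = 0" if "x \<noteq> a i" for i x
  proof (rule ccontr)
    assume "b \<theta> i x \<noteq> 0"
    then have "0 < b \<theta> i x" using mixed[OF \<theta>, of i] by (simp add: mixed_def less_le)
    then have "0 < (\<Prod>j\<in>UNIV. b \<theta> j ((g(i := x)) j))"
      using g by (intro prod_pos) auto
    moreover have "g(i := x) \<noteq> a" using that by (metis fun_upd_same)
    ultimately show False using other_zero by (metis less_irrefl)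
  qed
  have "b \<theta> i = pure_profile a i" for i
  proof -
    have b: "b \<theta> i = (\<lambda>y. if y = a i then b \<theta> i (a i) else 0)"
      using off_zero by auto
    have "1 = sum (b \<theta> i) UNIV" using mixed[OF \<theta>] by (simp add: mixed_def)
    also have "\<dots> = b \<theta> i (a i)" by (subst b) simp
    finally show ?thesis by (subst b) (auto simp: pure_profile_def)
  qed
  then show ?thesis by auto
qed

lemma equil_pure_best_response:
  fixes \<mu> :: "'p::finite \<Rightarrow> (('p \<Rightarrow> 'a::finite) \<Rightarrow> real) \<Rightarrow> real"
  assumes pd: "popdist \<mu>" and eq: "equil \<mu> b"
    and pure: "\<And>\<theta>. \<theta> \<in> suppP \<mu> \<Longrightarrow> b \<theta> = pure_profile a"
    and t: "t \<in> supp (\<mu> p)"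
  shows "t (a(p := x)) \<le> t a"
proof -
  obtain r where r: "r \<in> suppP \<mu>"
    using suppP_nonempty[OF pd] .
  define \<theta> where "\<theta> = r(p := t)"
  have "\<theta> \<in> suppP \<mu>" using t r by (simp add: suppP_def \<theta>_def)
  then have "nash \<theta> (pure_profile a)" using eq pure by (auto simp: equil_def)
  then have "\<theta> p (a(p := x)) \<le> \<theta> p a" by (simp add: nash_pure_profile_iff)
  then show ?thesis by (simp add: \<theta>_def)
qed

lemma fresh_constant_fun:
  assumes "finite (S :: ('b \<Rightarrow> real) set)"
  obtains c where "(\<lambda>_. c) \<notin> S"
proof -
  have "inj (\<lambda>c::real. \<lambda>_::'b. c)" by (auto simp: inj_def fun_eq_iff)
  then have "infinite (range (\<lambda>c::real. \<lambda>_::'b. c))"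
    by (simp add: finite_image_iff infinite_UNIV_char_0)
  then have "\<not> range (\<lambda>c::real. \<lambda>_::'b. c) \<subseteq> S"
    using assms finite_subset by blast
  then show ?thesis using that by blast
qed

lemma supp_postentry:
  assumes "i \<in> J" "0 < eps i" "eps i < 1" "thm i \<notin> supp (\<mu> i)"
  shows "supp (postentry \<mu> J thm eps i) = insert (thm i) (supp (\<mu> i))"
  using assms by (auto simp: postentry_def supp_def)

lemma sum_postentry_uniform:
  assumes "findist (\<mu> p)" "m p \<notin> supp (\<mu> p)"
  shows "(\<Sum>x\<in>insert (m p) (supp (\<mu> p)). postentry \<mu> UNIV m (\<lambda>_. e) p x * f (x = m p))
           = (1 - e) * f False + e * f True"
proof -
  have "(\<Sum>x\<in>supp (\<mu> p). postentry \<mu> UNIV m (\<lambda>_. e) p x * f (x = m p))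
          = (\<Sum>x\<in>supp (\<mu> p). (1 - e) * f False * \<mu> p x)"
    using assms(2) by (intro sum.cong) (auto simp: postentry_def)
  also have "\<dots> = (1 - e) * f False"
    using assms(1) by (simp add: findist_def sum_distrib_left[symmetric])
  finally show ?thesis
    using assms by (simp add: findist_def postentry_def supp_def)
qed

lemma avgfit_three_players:
  fixes \<mu> :: "'p::finite \<Rightarrow> (('p \<Rightarrow> 'a::finite) \<Rightarrow> real) \<Rightarrow> real"
  assumes ijk: "i \<noteq> j" "i \<noteq> k" "j \<noteq> k" "UNIV = {i, j, k}"
    and t: "t \<in> supp (\<mu> i)"
  shows "avgfit \<pi> \<mu> b i t = (\<Sum>x\<in>supp (\<mu> j). \<Sum>y\<in>supp (\<mu> k).
           \<mu> j x * \<mu> k y * EU (\<pi> i) (b (\<lambda>p. if p = i then t else if p = j then x else y)))"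
proof -
  define mk where "mk = (\<lambda>(x, y) p. if p = i then t else if p = j then x else (y :: ('p \<Rightarrow> 'a) \<Rightarrow> real))"
  have players: "p = i \<or> p = j \<or> p = k" for p
    using ijk by auto
  have slice: "{\<theta>\<in>suppP \<mu>. \<theta> i = t} = mk ` (supp (\<mu> j) \<times> supp (\<mu> k))"
  proof (intro equalityI subsetI)
    fix \<theta> assume \<theta>: "\<theta> \<in> {\<theta>\<in>suppP \<mu>. \<theta> i = t}"
    then have "\<theta> = mk (\<theta> j, \<theta> k)"
      using players ijk by (auto simp: mk_def fun_eq_iff)
    with \<theta> show "\<theta> \<in> mk ` (supp (\<mu> j) \<times> supp (\<mu> k))"
      by (auto simp: suppP_def)
  next
    fix \<theta> assume "\<theta> \<in> mk ` (supp (\<mu> j) \<times> supp (\<mu> k))"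
    then show "\<theta> \<in> {\<theta>\<in>suppP \<mu>. \<theta> i = t}"
      using players t ijk by (auto simp: suppP_def mk_def)
  qed
  have "inj_on mk (supp (\<mu> j) \<times> supp (\<mu> k))"
  proof (rule inj_onI)
    fix u v assume "mk u = mk v"
    then have "mk u j = mk v j" "mk u k = mk v k" by auto
    then show "u = v" using ijk by (cases u, cases v) (auto simp: mk_def)
  qed
  moreover have "UNIV - {i} = {j, k}"
    using ijk by auto
  ultimately show ?thesis
    using ijk unfolding avgfit_def slice
    by (auto simp: sum.reindex sum.cartesian_product mk_def split_def intro!: sum.cong)
qed

lemma avgfit_uniform_invasion:
  fixes \<mu> :: "'p::finite \<Rightarrow> (('p \<Rightarrow> 'a::finite) \<Rightarrow> real) \<Rightarrow> real"
    and m :: "'p \<Rightarrow> ('p \<Rightarrow> 'a) \<Rightarrow> real" and e :: real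
  defines "\<mu>' \<equiv> postentry \<mu> UNIV m (\<lambda>_. e)"
  assumes ijk: "i \<noteq> j" "i \<noteq> k" "j \<noteq> k" "UNIV = {i, j, k}"
    and pd: "popdist \<mu>" and fresh: "\<And>p. m p \<notin> supp (\<mu> p)" and e: "0 < e" "e < 1"
    and t: "t \<in> supp (\<mu>' i)"
    and F: "\<And>x y. x \<in> supp (\<mu>' j) \<Longrightarrow> y \<in> supp (\<mu>' k) \<Longrightarrow>
      EU (\<pi> i) (b (\<lambda>p. if p = i then t else if p = j then x else y)) = F (x = m j) (y = m k)"
  shows "avgfit \<pi> \<mu>' b i t
           = (1 - e) * ((1 - e) * F False False + e * F False True)
             + e * ((1 - e) * F True False + e * F True True)"
proof -
  have supp': "supp (\<mu>' p) = insert (m p) (supp (\<mu> p))" for p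
    unfolding \<mu>'_def using e fresh by (intro supp_postentry) auto
  have fd: "findist (\<mu> p)" for p
    using pd by (simp add: popdist_def)
  have "avgfit \<pi> \<mu>' b i t
          = (\<Sum>x\<in>supp (\<mu>' j). \<mu>' j x * (\<Sum>y\<in>supp (\<mu>' k). \<mu>' k y * F (x = m j) (y = m k)))"
    unfolding avgfit_three_players[where \<mu> = \<mu>' and i = i and j = j and k = k, OF ijk t]
    by (intro sum.cong refl) (simp add: F sum_distrib_left mult.assoc)
  also have "\<dots> = (\<Sum>x\<in>supp (\<mu>' j). \<mu>' j x * ((1 - e) * F (x = m j) False + e * F (x = m j) True))"
    unfolding supp'[of k] unfolding \<mu>'_def
    by (intro sum.cong refl arg_cong2[where f = "(*)"] sum_postentry_uniform fd fresh)
  also have "\<dots> = (1 - e) * ((1 - e) * F False False + e * F False True)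
                    + e * ((1 - e) * F True False + e * F True True)"
    unfolding supp'[of j] unfolding \<mu>'_def
    by (rule sum_postentry_uniform[OF fd fresh])
  finally show ?thesis .
qed

lemma stable_uniform_invasion:
  assumes "stable \<pi> \<mu> b" and fresh: "\<And>j. m j \<notin> supp (\<mu> j)"
  obtains e where "0 < e" "e < 1"
    and "\<And>b'. equil (postentry \<mu> UNIV m (\<lambda>_. e)) b' \<Longrightarrow> \<forall>\<theta>\<in>suppP \<mu>. b' \<theta> = b \<theta> \<Longrightarrow>
           (\<exists>j. \<forall>t\<in>supp (\<mu> j). avgfit \<pi> (postentry \<mu> UNIV m (\<lambda>_. e)) b' j t
                                > avgfit \<pi> (postentry \<mu> UNIV m (\<lambda>_. e)) b' j (m j))
           \<or> balanced \<pi> (postentry \<mu> UNIV m (\<lambda>_. e)) b'"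
proof -
  have "UNIV \<noteq> {} \<and> (\<forall>j\<in>UNIV. m j \<notin> supp (\<mu> j))"
    using fresh by simp
  from conjunct2[OF assms(1)[unfolded stable_def], THEN spec, THEN spec, THEN mp, OF this]
  obtain eb where eb: "0 < eb" "eb < 1"
    and inv: "\<forall>eps. (\<forall>j\<in>UNIV. 0 < eps j \<and> eps j < 1 \<and> eps j < eb) \<longrightarrow>
               (\<forall>b'. equil (postentry \<mu> UNIV m eps) b' \<and> (\<forall>\<theta>\<in>suppP \<mu>. b' \<theta> = b \<theta>) \<longrightarrow>
                 ((\<exists>j\<in>UNIV. \<forall>t\<in>supp (\<mu> j). avgfit \<pi> (postentry \<mu> UNIV m eps) b' j t
                                           > avgfit \<pi> (postentry \<mu> UNIV m eps) b' j (m j))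
                  \<or> balanced \<pi> (postentry \<mu> UNIV m eps) b'))"
    by (elim exE conjE) (rule that; assumption)
  have "0 < eb / 2" "eb / 2 < 1" "eb / 2 < eb"
    using eb by auto
  with inv show ?thesis
    by (intro that[of "eb / 2"]) auto
qed

definition profile3 :: "act \<Rightarrow> act \<Rightarrow> act \<Rightarrow> pl \<Rightarrow> act" where
  "profile3 x y z = (\<lambda>p. case p of P1 \<Rightarrow> x | P2 \<Rightarrow> y | P3 \<Rightarrow> z)"

lemma profile3_apply [simp]:
  "profile3 x y z P1 = x" "profile3 x y z P2 = y" "profile3 x y z P3 = z"
  by (simp_all add: profile3_def)

lemma profile3_upd [simp]:
  "(profile3 x y z)(P1 := w) = profile3 w y z"
  "(profile3 x y z)(P2 := w) = profile3 x w z"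
  "(profile3 x y z)(P3 := w) = profile3 x y w"
  by (auto simp: profile3_def fun_eq_iff split: pl.splits)

lemma const_X1_eq_profile3: "(\<lambda>_. X1) = profile3 X1 X1 X1"
  by (auto simp: profile3_def fun_eq_iff split: pl.splits)

lemma piG_profile3: "piG i (profile3 x y z) = pick i (fitvec x y z)"
  by (simp add: piG_def)

lemma UNIV_pl: "(UNIV :: pl set) = {P1, P2, P3}"
  by (auto intro: pl.exhaust)

lemma strict_nash_all_X1: "strict_nash_pure piG (\<lambda>_. X1)"
  unfolding strict_nash_pure_def const_X1_eq_profile3
proof (intro allI impI)
  fix i x assume "x \<noteq> profile3 X1 X1 X1 i"
  then show "piG i ((profile3 X1 X1 X1)(i := x)) < piG i (profile3 X1 X1 X1)"
    by (cases i; cases x) (auto simp: piG_profile3)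
qed

lemma pareto_efficient_all_X1: "pareto_efficient piG (\<lambda>_. X1)"
  unfolding pareto_efficient_def
proof
  assume "\<exists>a'. (\<forall>i. piG i (\<lambda>_. X1) \<le> piG i a') \<and> (\<exists>i. piG i (\<lambda>_. X1) < piG i a')"
  then obtain a' i where ge: "\<And>i. piG i (\<lambda>_. X1) \<le> piG i a'" and gt: "piG i (\<lambda>_. X1) < piG i a'"
    by blast
  from ge[of P1] ge[of P2] ge[of P3] gt show False
    by (cases "a' P1"; cases "a' P2"; cases "a' P3"; cases i) (auto simp: piG_def)
qed

text \<open>The flags record which of the three players are mutants.\<close>
definition mutant_fitness :: "bool \<Rightarrow> bool \<Rightarrow> bool \<Rightarrow> real \<times> real \<times> real" where
  "mutant_fitness mut1 mut2 mut3 =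
     (if mut1 \<and> mut2 \<and> \<not> mut3 then (9, 6, 0)
      else if \<not> mut1 \<and> mut2 \<and> mut3 then (0, 9, 6)
      else if mut1 \<and> \<not> mut2 \<and> mut3 then (6, 0, 9)
      else (7, 7, 7))"

text \<open>In a match of two mutants with one incumbent the incumbent's action affects nobody's
  fitness, so it simply best-responds.\<close>
definition mutant_play :: "(pl \<Rightarrow> (pl \<Rightarrow> act) \<Rightarrow> real) \<Rightarrow> (pl \<Rightarrow> (pl \<Rightarrow> act) \<Rightarrow> real) \<Rightarrow> pl \<Rightarrow> act" where
  "mutant_play m \<theta> =
     (let mut1 = (\<theta> P1 = m P1); mut2 = (\<theta> P2 = m P2); mut3 = (\<theta> P3 = m P3) in
      if mut1 \<and> mut2 \<and> \<not> mut3 then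
        profile3 X1 X2 (if \<theta> P3 (profile3 X1 X2 X2) \<le> \<theta> P3 (profile3 X1 X2 X1) then X1 else X2)
      else if \<not> mut1 \<and> mut2 \<and> mut3 then
        profile3 (if \<theta> P1 (profile3 X2 X1 X2) \<le> \<theta> P1 (profile3 X1 X1 X2) then X1 else X2) X1 X2
      else if mut1 \<and> \<not> mut2 \<and> mut3 then
        profile3 X2 (if \<theta> P2 (profile3 X2 X2 X1) \<le> \<theta> P2 (profile3 X2 X1 X1) then X1 else X2) X1
      else profile3 X1 X1 X1)"

lemma piG_mutant_play:
  "piG i (mutant_play m \<theta>) = pick i (mutant_fitness (\<theta> P1 = m P1) (\<theta> P2 = m P2) (\<theta> P3 = m P3))"
  by (cases i) (auto simp: mutant_play_def mutant_fitness_def Let_def piG_profile3)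

lemma mutant_play_incumbents:
  assumes "\<theta> P1 \<noteq> m P1" "\<theta> P2 \<noteq> m P2" "\<theta> P3 \<noteq> m P3"
  shows "mutant_play m \<theta> = profile3 X1 X1 X1"
  using assms by (simp add: mutant_play_def)

lemma nash_mutant_play:
  assumes const: "\<And>p. m p = (\<lambda>_. c p)"
    and types: "\<And>p. \<theta> p = m p \<or> (\<forall>x. \<theta> p ((profile3 X1 X1 X1)(p := x)) \<le> \<theta> p (profile3 X1 X1 X1))"
  shows "nash \<theta> (pure_profile (mutant_play m \<theta>))"
  unfolding nash_pure_profile_iff
proof (intro allI)
  fix i x
  show "\<theta> i ((mutant_play m \<theta>)(i := x)) \<le> \<theta> i (mutant_play m \<theta>)"
  proof (cases "\<theta> i = m i")
    case True
    then show ?thesis using const by simp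
  next
    case False
    with types[of i] have "\<theta> i ((profile3 X1 X1 X1)(i := x)) \<le> \<theta> i (profile3 X1 X1 X1)"
      by blast
    with False show ?thesis
      by (cases i; cases x) (auto simp: mutant_play_def Let_def)
  qed
qed

lemma equil_mutant_play:
  assumes const: "\<And>p. m p = (\<lambda>_. c p)" and fresh: "\<And>p. m p \<notin> supp (\<mu> p)"
    and e: "0 < e" "e < 1"
    and br: "\<And>p t x. t \<in> supp (\<mu> p) \<Longrightarrow> t ((profile3 X1 X1 X1)(p := x)) \<le> t (profile3 X1 X1 X1)"
  shows "equil (postentry \<mu> UNIV m (\<lambda>_. e)) (\<lambda>\<theta>. pure_profile (mutant_play m \<theta>))"
  unfolding equil_def
proof
  fix \<theta> assume "\<theta> \<in> suppP (postentry \<mu> UNIV m (\<lambda>_. e))"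
  then have "\<theta> p = m p \<or> \<theta> p \<in> supp (\<mu> p)" for p
    using supp_postentry[of p UNIV "\<lambda>_. e" m \<mu>] e fresh by (auto simp: suppP_def)
  then show "nash \<theta> (pure_profile (mutant_play m \<theta>))"
    using br by (intro nash_mutant_play[OF const]) blast
qed

lemma avgfit_mutant_play:
  fixes \<mu> :: "pl \<Rightarrow> ((pl \<Rightarrow> act) \<Rightarrow> real) \<Rightarrow> real"
    and m :: "pl \<Rightarrow> (pl \<Rightarrow> act) \<Rightarrow> real" and e :: real
  defines "\<mu>' \<equiv> postentry \<mu> UNIV m (\<lambda>_. e)"
  assumes pd: "popdist \<mu>" and fresh: "\<And>p. m p \<notin> supp (\<mu> p)" and e: "0 < e" "e < 1"
    and t: "t \<in> supp (\<mu>' i)"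
  shows "avgfit piG \<mu>' (\<lambda>\<theta>. pure_profile (mutant_play m \<theta>)) i t
           = (if t = m i then 7 + e - e\<^sup>2 else 7 - 7 * e\<^sup>2)"
proof -
  have EU: "EU (piG i) (pure_profile (mutant_play m \<theta>))
              = pick i (mutant_fitness (\<theta> P1 = m P1) (\<theta> P2 = m P2) (\<theta> P3 = m P3))" for i \<theta>
    by (simp add: EU_pure_profile piG_mutant_play)
  note invasion = avgfit_uniform_invasion[OF _ _ _ _ pd fresh e, folded \<mu>'_def]
  show ?thesis
  proof (cases i)
    case P1
    have "avgfit piG \<mu>' (\<lambda>\<theta>. pure_profile (mutant_play m \<theta>)) i t
            = (1 - e) * ((1 - e) * pick P1 (mutant_fitness (t = m P1) False False)
                         + e * pick P1 (mutant_fitness (t = m P1) False True))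
              + e * ((1 - e) * pick P1 (mutant_fitness (t = m P1) True False)
                     + e * pick P1 (mutant_fitness (t = m P1) True True))"
      unfolding P1
      by (rule invasion[where j = P2 and k = P3]) (use t P1 UNIV_pl in \<open>simp_all add: EU\<close>)
    then show ?thesis
      using P1 by (cases "t = m P1") (simp_all add: mutant_fitness_def power2_eq_square algebra_simps)
  next
    case P2
    have "avgfit piG \<mu>' (\<lambda>\<theta>. pure_profile (mutant_play m \<theta>)) i t
            = (1 - e) * ((1 - e) * pick P2 (mutant_fitness False (t = m P2) False)
                         + e * pick P2 (mutant_fitness False (t = m P2) True))
              + e * ((1 - e) * pick P2 (mutant_fitness True (t = m P2) False)
                     + e * pick P2 (mutant_fitness True (t = m P2) True))"
      unfolding P2
      by (rule invasion[where j = P1 and k = P3]) (use t P2 UNIV_pl in \<open>auto simp: EU\<close>)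
    then show ?thesis
      using P2 by (cases "t = m P2") (simp_all add: mutant_fitness_def power2_eq_square algebra_simps)
  next
    case P3
    have "avgfit piG \<mu>' (\<lambda>\<theta>. pure_profile (mutant_play m \<theta>)) i t
            = (1 - e) * ((1 - e) * pick P3 (mutant_fitness False False (t = m P3))
                         + e * pick P3 (mutant_fitness False True (t = m P3)))
              + e * ((1 - e) * pick P3 (mutant_fitness True False (t = m P3))
                     + e * pick P3 (mutant_fitness True True (t = m P3)))"
      unfolding P3
      by (rule invasion[where j = P1 and k = P2]) (use t P3 UNIV_pl in \<open>auto simp: EU\<close>)
    then show ?thesis
      using P3 by (cases "t = m P3") (simp_all add: mutant_fitness_def power2_eq_square algebra_simps)
  qed
qed

lemma avgfit_mutant_play_gap:
  fixes \<mu> :: "pl \<Rightarrow> ((pl \<Rightarrow> act) \<Rightarrow> real) \<Rightarrow> real"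
    and m :: "pl \<Rightarrow> (pl \<Rightarrow> act) \<Rightarrow> real" and e :: real
  defines "\<mu>' \<equiv> postentry \<mu> UNIV m (\<lambda>_. e)" and "b' \<equiv> \<lambda>\<theta>. pure_profile (mutant_play m \<theta>)"
  assumes pd: "popdist \<mu>" and fresh: "\<And>p. m p \<notin> supp (\<mu> p)" and e: "0 < e" "e < 1"
    and t: "t \<in> supp (\<mu> i)"
  shows "avgfit piG \<mu>' b' i t < avgfit piG \<mu>' b' i (m i)"
proof -
  have supp': "supp (\<mu>' i) = insert (m i) (supp (\<mu> i))"
    unfolding \<mu>'_def using e fresh by (intro supp_postentry) auto
  have "t \<noteq> m i" using t fresh by metis
  then have "avgfit piG \<mu>' b' i t = 7 - 7 * e\<^sup>2"
    using avgfit_mutant_play[OF pd fresh e, of t i] t supp' by (simp add: \<mu>'_def b'_def)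
  moreover have "avgfit piG \<mu>' b' i (m i) = 7 + e - e\<^sup>2"
    using avgfit_mutant_play[OF pd fresh e, of "m i" i] supp' by (simp add: \<mu>'_def b'_def)
  ultimately show ?thesis
    using e mult_pos_pos[OF e(1) e(1)] unfolding power2_eq_square by linarith
qed

lemma mutant_play_refutes_stability:
  fixes \<mu> :: "pl \<Rightarrow> ((pl \<Rightarrow> act) \<Rightarrow> real) \<Rightarrow> real"
    and m :: "pl \<Rightarrow> (pl \<Rightarrow> act) \<Rightarrow> real" and e :: real
  defines "\<mu>' \<equiv> postentry \<mu> UNIV m (\<lambda>_. e)" and "b' \<equiv> \<lambda>\<theta>. pure_profile (mutant_play m \<theta>)"
  assumes pd: "popdist \<mu>" and fresh: "\<And>p. m p \<notin> supp (\<mu> p)" and e: "0 < e" "e < 1"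
  shows "\<not> ((\<exists>j. \<forall>t\<in>supp (\<mu> j). avgfit piG \<mu>' b' j t > avgfit piG \<mu>' b' j (m j))
            \<or> balanced piG \<mu>' b')"
proof
  obtain r where r: "r \<in> suppP \<mu>"
    using suppP_nonempty[OF pd] .
  then have r_supp: "r j \<in> supp (\<mu> j)" for j
    by (simp add: suppP_def)
  note gap = avgfit_mutant_play_gap[OF pd fresh e r_supp, folded \<mu>'_def b'_def]
  assume "(\<exists>j. \<forall>t\<in>supp (\<mu> j). avgfit piG \<mu>' b' j t > avgfit piG \<mu>' b' j (m j))
            \<or> balanced piG \<mu>' b'"
  then show False
  proof
    assume "\<exists>j. \<forall>t\<in>supp (\<mu> j). avgfit piG \<mu>' b' j t > avgfit piG \<mu>' b' j (m j)"
    then show False using gap r_supp by (meson less_asym)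
  next
    assume "balanced piG \<mu>' b'"
    moreover have "r P1 \<in> supp (\<mu>' P1)" "m P1 \<in> supp (\<mu>' P1)"
      unfolding \<mu>'_def using supp_postentry[of P1 UNIV "\<lambda>_. e" m \<mu>] e fresh r_supp by auto
    ultimately have "avgfit piG \<mu>' b' P1 (r P1) = avgfit piG \<mu>' b' P1 (m P1)"
      unfolding balanced_def by blast
    then show False using gap[of P1] by simp
  qed
qed

lemma not_stable_profile_all_X1: "\<not> stable_profile piG (\<lambda>_. X1)"
proof
  assume "stable_profile piG (\<lambda>_. X1)"
  then obtain \<mu> b where pd: "popdist \<mu>" and eq: "equil \<mu> b" and st: "stable piG \<mu> b"
    and oc: "\<And>a'. outcome \<mu> b a' = (if a' = (\<lambda>_. X1) then 1 else 0)"
    unfolding stable_profile_def by blast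
  have pure: "b \<theta> = pure_profile (profile3 X1 X1 X1)" if "\<theta> \<in> suppP \<mu>" for \<theta>
    using equil_point_outcome_pure[OF pd eq oc that] by (simp add: const_X1_eq_profile3)
  have br: "t ((profile3 X1 X1 X1)(p := x)) \<le> t (profile3 X1 X1 X1)" if "t \<in> supp (\<mu> p)" for p t x
    using equil_pure_best_response[OF pd eq pure that] .
  have "\<forall>p. \<exists>c. (\<lambda>_. c) \<notin> supp (\<mu> p)"
    using pd fresh_constant_fun by (metis findist_def popdist_def)
  then obtain c where c: "\<And>p. (\<lambda>_. c p) \<notin> supp (\<mu> p)" by metis
  define m where "m p = (\<lambda>_ :: pl \<Rightarrow> act. c p)" for p
  have fresh: "m p \<notin> supp (\<mu> p)" for p
    using c by (simp add: m_def)
  obtain e where e: "0 < e" "e < 1" and invasion: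
    "\<And>b'. equil (postentry \<mu> UNIV m (\<lambda>_. e)) b' \<Longrightarrow> \<forall>\<theta>\<in>suppP \<mu>. b' \<theta> = b \<theta> \<Longrightarrow>
       (\<exists>j. \<forall>t\<in>supp (\<mu> j). avgfit piG (postentry \<mu> UNIV m (\<lambda>_. e)) b' j t
                            > avgfit piG (postentry \<mu> UNIV m (\<lambda>_. e)) b' j (m j))
       \<or> balanced piG (postentry \<mu> UNIV m (\<lambda>_. e)) b'"
    using stable_uniform_invasion[OF st fresh] by blast
  let ?\<mu>' = "postentry \<mu> UNIV m (\<lambda>_. e)" and ?b' = "\<lambda>\<theta>. pure_profile (mutant_play m \<theta>)"
  have "\<forall>\<theta>\<in>suppP \<mu>. ?b' \<theta> = b \<theta>"
  proof
    fix \<theta> assume \<theta>: "\<theta> \<in> suppP \<mu>"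
    then have "\<theta> p \<noteq> m p" for p
      using fresh by (metis suppP_def mem_Collect_eq)
    then show "?b' \<theta> = b \<theta>"
      using pure[OF \<theta>] by (simp add: mutant_play_incumbents)
  qed
  moreover have "equil ?\<mu>' ?b'"
    using m_def fresh e br by (rule equil_mutant_play)
  ultimately show False
    using invasion mutant_play_refutes_stability[OF pd fresh e] by blast
qed

theorem mainTheorem8:
  shows "strict_nash_pure piG (\<lambda>_. X1) \<and> pareto_efficient piG (\<lambda>_. X1)
         \<and> \<not> stable_profile piG (\<lambda>_. X1)"
  using strict_nash_all_X1 pareto_efficient_all_X1 not_stable_profile_all_X1 by blast

end
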